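(* Let $G$ be a graph and $u$ a vertex of $G$ such that the configuration $\overline{\mathbf{c}_u}$ is solvable. Then $\mathbf{p}(u)=0$ for every pattern $\mathbf{p}$ with $N(G)\mathbf{p}=\overline{\mathbf{c}_u}$.
   Context: For a finite simple graph $G$ with vertex set $\{v_1,\dots,v_n\}$, the closed adjacency matrix $N(G)$ is the $n\times n$ matrix over $\mathbb{Z}_2$ whose $(i,j)$ entry is $1$ iff $i=j$ or $v_i$ is adjacent to $v_j$. Vectors in $\mathbb{Z}_2^{V(G)}$ are patterns/configurations; a configuration $\mathbf{c}$ is solvable if $N(G)\mathbf{p}=\mathbf{c}$ for some pattern $\mathbf{p}$. $\mathbf{1}$ is the all-ones vector, $\mathbf{c}_u$ is the vector with $\mathbf{c}_u(v)=1$ iff $v=u$, and $\overline{\mathbf{c}_u}:=\mathbf{c}_u+\mathbf{1}$. *)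

theory Defs
  imports "HOL-Analysis.Analysis" "HOL-Library.Z2"
begin

definition simple_graph :: "('n::finite \<Rightarrow> 'n \<Rightarrow> bool) \<Rightarrow> bool" where
  "simple_graph E \<longleftrightarrow> (\<forall>x y. E x y \<longrightarrow> E y x) \<and> (\<forall>x. \<not> E x x)"

definition closed_adj :: "('n::finite \<Rightarrow> 'n \<Rightarrow> bool) \<Rightarrow> bit ^ 'n ^ 'n" where
  "closed_adj E = (\<chi> i j. if i = j \<or> E i j then 1 else 0)"

definition unit_config :: "'n::finite \<Rightarrow> bit ^ 'n" where
  "unit_config u = (\<chi> v. if v = u then 1 else 0)"

definition co_unit_config :: "'n::finite \<Rightarrow> bit ^ 'n" where
  "co_unit_config u = unit_config u + (\<chi> v. 1)"

definition solvable :: "('n::finite \<Rightarrow> 'n \<Rightarrow> bool) \<Rightarrow> bit ^ 'n \<Rightarrow> bool" where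
  "solvable E c \<longleftrightarrow> (\<exists>p. closed_adj E *v p = c)"

end

theory Submission
  imports Defs
begin

text \<open>Over \<open>\<int>\<^sub>2\<close>, the quadratic form of a symmetric matrix collapses to its diagonal, since the
off-diagonal terms \<open>p\<^sub>i N\<^sub>i\<^sub>j p\<^sub>j\<close> and \<open>p\<^sub>j N\<^sub>j\<^sub>i p\<^sub>i\<close> cancel; with unit diagonal and
\<open>p\<^sub>i\<^sup>2 = p\<^sub>i\<close> this gives \<open>p \<cdot> N p = \<Sum>\<^sub>i p\<^sub>i\<close>. If \<open>N p = c\<^sub>u + 1\<close>, the left side is
\<open>p \<cdot> (c\<^sub>u + 1) = p\<^sub>u + \<Sum>\<^sub>i p\<^sub>i\<close>, hence \<open>p\<^sub>u = 0\<close>.\<close>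

lemma sum_symmetric_double_char2:
  fixes f :: "'a \<Rightarrow> 'a \<Rightarrow> 'b::comm_ring_1"
  assumes char2: "(2::'b) = 0" and "finite A" and sym: "\<And>i j. f i j = f j i"
  shows "(\<Sum>i\<in>A. \<Sum>j\<in>A. f i j) = (\<Sum>i\<in>A. f i i)"
  using \<open>finite A\<close>
proof (induction A rule: finite_induct)
  case empty
  then show ?case by simp
next
  case (insert x A)
  have double: "y + y = 0" for y :: 'b
    by (metis char2 mult_2 mult_zero_left)
  have "(\<Sum>i\<in>insert x A. \<Sum>j\<in>insert x A. f i j)
      = f x x + ((\<Sum>i\<in>A. f i x) + (\<Sum>j\<in>A. f x j)) + (\<Sum>i\<in>A. \<Sum>j\<in>A. f i j)"
    using insert.hyps by (simp add: sum.distrib algebra_simps)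
  also have "(\<Sum>i\<in>A. f i x) + (\<Sum>j\<in>A. f x j) = 0"
    using sym double by simp
  finally show ?case
    using insert by simp
qed

lemma quadratic_form_symmetric_char2:
  fixes A :: "'b::comm_ring_1 ^ 'n ^ 'n"
  assumes "(2::'b) = 0" and "transpose A = A"
  shows "(\<Sum>i\<in>UNIV. p $ i * (A *v p) $ i) = (\<Sum>i\<in>UNIV. A $ i $ i * p $ i * p $ i)"
proof -
  have sym: "A $ i $ j = A $ j $ i" for i j
    by (metis assms(2) transpose_def vec_lambda_beta)
  have "(\<Sum>i\<in>UNIV. p $ i * (A *v p) $ i) = (\<Sum>i\<in>UNIV. \<Sum>j\<in>UNIV. p $ i * A $ i $ j * p $ j)"
    by (simp add: matrix_vector_mult_def sum_distrib_left mult.assoc)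
  also have "\<dots> = (\<Sum>i\<in>UNIV. p $ i * A $ i $ i * p $ i)"
    by (rule sum_symmetric_double_char2) (simp_all add: assms(1) sym mult.commute mult.left_commute)
  finally show ?thesis
    by (simp add: mult.commute)
qed

lemma transpose_closed_adj:
  assumes "simple_graph E"
  shows "transpose (closed_adj E) = closed_adj E"
  using assms unfolding simple_graph_def closed_adj_def transpose_def
  by (auto simp: vec_eq_iff)

lemma closed_adj_diag [simp]: "closed_adj E $ i $ i = 1"
  by (simp add: closed_adj_def)

lemma bit_mult_self [simp]: "(x::bit) * x = x"
  by (cases x) simp_all

lemma quadratic_form_closed_adj:
  assumes "simple_graph E"
  shows "(\<Sum>i\<in>UNIV. p $ i * (closed_adj E *v p) $ i) = (\<Sum>i\<in>UNIV. p $ i)"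
  using quadratic_form_symmetric_char2[OF bit_2_eq_0 transpose_closed_adj[OF assms]]
  by (simp only: closed_adj_diag mult_1_left bit_mult_self)

lemma sum_mult_co_unit_config:
  "(\<Sum>i\<in>UNIV. p $ i * co_unit_config u $ i) = p $ u + (\<Sum>i\<in>UNIV. p $ i)"
proof -
  have "(\<Sum>i\<in>UNIV. p $ i * unit_config u $ i) = p $ u"
    unfolding unit_config_def vec_lambda_beta
    by (simp only: if_distrib mult_1_right mult_zero_right sum.delta[OF finite] UNIV_I if_True)
  then show ?thesis
    unfolding co_unit_config_def vector_add_component vec_lambda_beta
    by (simp only: distrib_left mult_1_right sum.distrib)
qed

theorem lemma2p1:
  fixes E :: "'n::finite \<Rightarrow> 'n \<Rightarrow> bool" and u :: 'n
  assumes "simple_graph E"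
    and "solvable E (co_unit_config u)"
  shows "\<forall>p. closed_adj E *v p = co_unit_config u \<longrightarrow> p $ u = 0"
proof (intro allI impI)
  fix p :: "bit ^ 'n"
  assume "closed_adj E *v p = co_unit_config u"
  then have "p $ u + (\<Sum>i\<in>UNIV. p $ i) = (\<Sum>i\<in>UNIV. p $ i)"
    using quadratic_form_closed_adj[OF assms(1), of p] sum_mult_co_unit_config[of p u]
    by (simp only:)
  then show "p $ u = 0"
    by (simp only: add_cancel_left_left)
qed

end
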